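(* Let $P$ be an $n\times l$ matrix over $\mathbb{F}_2$ and let $\theta\in\mathbb{R}$. Then \[ \langle \mathbf{0}|\exp(i\theta \mathbf{H}_P)|\mathbf{0}\rangle=\alpha_{(P,\theta)}, \] and for every nonzero $\mathbf{x}\in\mathbb{F}_2^l$, \[ \langle \mathbf{x}|\exp(i\theta \mathbf{H}_P)|\mathbf{0}\rangle=\alpha_{(P\top\mathbf{x},\theta)}-\alpha_{(P,\theta)}. \]
   Context: For an $n\times l$ binary matrix $P$ with rows $P_1,\dots,P_n\in\mathbb{F}_2^l$, the Hamiltonian on $l$ qubits is $\mathbf{H}_P=\sum_{a=1}^n\prod_{b=1}^l X_b^{P_{ab}}$, where $X_b$ is the Pauli $X$ operator on qubit $b$; $|\mathbf{x}\rangle$ denotes the computational basis state labelled by $\mathbf{x}\in\mathbb{F}_2^l$. The code $\mathcal{C}(P)\subseteq\mathbb{F}_2^n$ is the span of the columns of $P$; its rank $r$ is the rank of $P$ (so $|\mathcal{C}(P)|=2^r$), and $n$ is its length. The weight enumerator is $W_{\mathcal{C}}(\zeta)=\sum_{\mathbf{c}\in\mathcal{C}}\zeta^{|\mathbf{c}|}$, with $|\mathbf{c}|$ the Hamming weight. Define $\alpha_{(P,\theta)}=2^{-r}e^{i\theta n}W_{\mathcal{C}(P)}(e^{-2i\theta})$. For nonzero $\mathbf{x}\in\mathbb{F}_2^l$, the projection $P\top\mathbf{x}$ is the $n\times l$ matrix obtained from $P$ by replacing each row $\mathbf{a}$ by whichever of $\mathbf{a}$, $\mathbf{a}+\mathbf{x}$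 is lexicographically first. *)

theory Defs
  imports Complex_Main
begin

text \<open>Vectors in F_2^m are bool lists of length m (True = 1). An n x l binary
matrix P is a list of n rows, each a bool list of length l.\<close>

definition vadd :: "bool list \<Rightarrow> bool list \<Rightarrow> bool list" where
  "vadd u v = map2 (\<lambda>a b. a \<noteq> b) u v"

definition zerovec :: "nat \<Rightarrow> bool list" where
  "zerovec l = replicate l False"

definition hweight :: "bool list \<Rightarrow> nat" where
  "hweight c = length (filter id c)"

text \<open>States are functions F_2^l -> complex (amplitudes on computational basis).
 The operator prod_b X_b^{P_ab} maps |y> to |y + P_a>; hence
 (H_P psi)(y) = sum_a psi(y + P_a).\<close>
definition hamil :: "bool list list \<Rightarrow> (bool list \<Rightarrow> complex) \<Rightarrow> (bool list \<Rightarrow> complex)" where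
  "hamil P \<psi> = (\<lambda>y. \<Sum>a<length P. \<psi> (vadd y (P ! a)))"

definition ket :: "bool list \<Rightarrow> (bool list \<Rightarrow> complex)" where
  "ket x = (\<lambda>y. if y = x then 1 else 0)"

definition exp_iH :: "bool list list \<Rightarrow> real \<Rightarrow> (bool list \<Rightarrow> complex) \<Rightarrow> (bool list \<Rightarrow> complex)" where
  "exp_iH P \<theta> \<psi> = (\<lambda>y. \<Sum>k. (\<i> * of_real \<theta>) ^ k / of_nat (fact k) * ((hamil P ^^ k) \<psi>) y)"

definition amp :: "nat \<Rightarrow> bool list list \<Rightarrow> real \<Rightarrow> bool list \<Rightarrow> complex" where
  "amp l P \<theta> x = exp_iH P \<theta> (ket (zerovec l)) x"

text \<open>Code C(P): the F_2-span of the columns of P, i.e. all vectors P c, c in F_2^l.\<close>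
definition code :: "nat \<Rightarrow> bool list list \<Rightarrow> bool list set" where
  "code l P = {map (\<lambda>r. odd (card {b. b < l \<and> r ! b \<and> c ! b})) P | c. length c = l}"

definition weight_enum :: "bool list set \<Rightarrow> complex \<Rightarrow> complex" where
  "weight_enum C \<zeta> = (\<Sum>c\<in>C. \<zeta> ^ hweight c)"

definition alpha :: "nat \<Rightarrow> bool list list \<Rightarrow> real \<Rightarrow> complex" where
  "alpha l P \<theta> = (1 / of_nat (card (code l P))) * exp (\<i> * of_real \<theta> * of_nat (length P))
      * weight_enum (code l P) (exp (- 2 * \<i> * of_real \<theta>))"

fun lex_less :: "bool list \<Rightarrow> bool list \<Rightarrow> bool" where
  "lex_less [] _ = False"
| "lex_less _ [] = False"
| "lex_less (a # as) (b # bs) = ((\<not> a \<and> b) \<or> (a = b \<and> lex_less as bs))"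

definition proj :: "bool list list \<Rightarrow> bool list \<Rightarrow> bool list list" where
  "proj P x = map (\<lambda>a. if lex_less (vadd a x) a then vadd a x else a) P"

end

theory Submission
  imports Defs
begin

text \<open>
The characters \<open>\<chi>\<^sub>c(y) = (-1)\<^bsup>c\<cdot>y\<^esup>\<close> of \<open>F\<^sub>2\<^sup>l\<close> diagonalise every
\<open>X\<close>-type operator: \<open>H\<^sub>P \<chi>\<^sub>c = \<lambda>\<^sub>P(c) \<chi>\<^sub>c\<close> with
\<open>\<lambda>\<^sub>P(c) = \<Sum>\<^sub>a (-1)\<^bsup>c\<cdot>P\<^sub>a\<^esup> = n - 2|Pc|\<close>, and \<open>|0\<rangle> = 2\<^sup>-\<^sup>l \<Sum>\<^sub>c \<chi>\<^sub>c\<close>.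
Hence \<open>\<langle>y|exp(i\<theta>H\<^sub>P)|0\<rangle> = 2\<^sup>-\<^sup>l \<Sum>\<^sub>c \<chi>\<^sub>c(y) e\<^bsup>i\<theta>\<lambda>\<^sub>P(c)\<^esup>\<close>.
Since \<open>c \<mapsto> Pc\<close> is linear with all fibres of size \<open>2\<^sup>l/|C(P)|\<close>, the same
sum without the character is exactly \<open>\<alpha>\<^bsub>(P,\<theta>)\<^esub>\<close>.
For \<open>x \<noteq> 0\<close> let \<open>j\<close> be its first nonzero coordinate. Every row of \<open>P\<top>x\<close>
vanishes at \<open>j\<close>, so \<open>\<lambda>\<^bsub>P\<top>x\<^esub>\<close> is invariant under \<open>c \<mapsto> c + e\<^sub>j\<close>, a map
which flips \<open>c\<cdot>x\<close>; and on \<open>c\<cdot>x = 0\<close> the projection does not change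
\<open>\<lambda>\<close>. Thus \<open>\<Sum>\<^sub>c e\<^bsup>i\<theta>\<lambda>\<^bsub>P\<top>x\<^esub>(c)\<^esup> = \<Sum>\<^sub>c (1 + \<chi>\<^sub>c(x)) e\<^bsup>i\<theta>\<lambda>\<^sub>P(c)\<^esup>\<close>.
\<close>

section \<open>Vectors over \<open>F\<^sub>2\<close>\<close>

definition vecs :: "nat \<Rightarrow> bool list set" where
  "vecs l = {c. length c = l}"

fun dot :: "bool list \<Rightarrow> bool list \<Rightarrow> bool" where
  "dot (a # as) (b # bs) = ((a \<and> b) \<noteq> dot as bs)"
| "dot _ _ = False"

definition sign :: "bool \<Rightarrow> complex" where
  "sign b = (if b then -1 else 1)"

definition unit_vec :: "nat \<Rightarrow> nat \<Rightarrow> bool list" where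
  "unit_vec l j = (zerovec l)[j := True]"

lemma length_zerovec [simp]: "length (zerovec l) = l"
  by (simp add: zerovec_def)

lemma length_unit_vec [simp]: "length (unit_vec l j) = l"
  by (simp add: unit_vec_def zerovec_def)

lemma vadd_Cons [simp]: "vadd (a # as) (b # bs) = (a \<noteq> b) # vadd as bs"
  by (simp add: vadd_def)

lemma vadd_Nil [simp]: "vadd [] bs = []" "vadd as [] = []"
  by (auto simp: vadd_def)

lemma length_vadd [simp]: "length (vadd a b) = min (length a) (length b)"
  by (simp add: vadd_def)

lemma nth_vadd: "j < length a \<Longrightarrow> j < length b \<Longrightarrow> vadd a b ! j = (a ! j \<noteq> b ! j)"
  by (simp add: vadd_def)

lemma vadd_vadd_cancel: "length c = length d \<Longrightarrow> vadd (vadd c d) d = c"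
  by (induction c d rule: list_induct2) auto

lemma vadd_self: "vadd c c = zerovec (length c)"
  by (induction c) (auto simp: zerovec_def)

lemma vadd_zerovec: "length c = k \<Longrightarrow> vadd c (zerovec k) = c"
  by (induction c arbitrary: k) (auto simp: zerovec_def)

lemma vadd_commute: "vadd c d = vadd d c"
  unfolding vadd_def by (induction c d rule: list_induct2') auto

lemma finite_vecs [simp]: "finite (vecs l)"
  using finite_lists_length_eq[of "UNIV :: bool set" l] by (simp add: vecs_def)

lemma card_vecs: "card (vecs l) = 2 ^ l"
  using card_lists_length_eq[of "UNIV :: bool set" l] by (simp add: vecs_def)

lemma sum_vecs_translate:
  assumes "e \<in> vecs l"
  shows "(\<Sum>c\<in>vecs l. f (vadd c e)) = (\<Sum>c\<in>vecs l. f c)"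
proof -
  have "bij_betw (\<lambda>c. vadd c e) (vecs l) (vecs l)"
    by (rule bij_betw_byWitness[where f' = "\<lambda>c. vadd c e"])
       (use assms in \<open>auto simp: vecs_def vadd_vadd_cancel\<close>)
  then show ?thesis by (rule sum.reindex_bij_betw)
qed

lemma nonzero_vec_first_one:
  assumes "length x = l" "x \<noteq> zerovec l"
  obtains j where "j < l" "x ! j" "\<forall>i<j. \<not> x ! i"
proof -
  have "\<exists>j. j < l \<and> x ! j"
  proof (rule ccontr)
    assume "\<not> ?thesis"
    then have "x = zerovec l"
      using assms(1) by (intro nth_equalityI) (auto simp: zerovec_def)
    with assms(2) show False ..
  qed
  then obtain j where j: "j < l \<and> x ! j" and least: "\<forall>i<j. \<not> (i < l \<and> x ! i)"
    unfolding exists_least_iff[of "\<lambda>j. j < l \<and> x ! j"] by blast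
  from least j have "\<forall>i<j. \<not> x ! i" by auto
  with j that show thesis by blast
qed

lemma dot_commute: "dot a b = dot b a"
  by (induction a b rule: dot.induct) auto

lemma dot_vadd:
  "length c = length y \<Longrightarrow> length y = length z \<Longrightarrow> dot c (vadd y z) = (dot c y \<noteq> dot c z)"
proof (induction c arbitrary: y z)
  case (Cons a c)
  then obtain b y' d z' where "y = b # y'" "z = d # z'"
    by (metis length_Suc_conv)
  with Cons show ?case by auto
qed simp

lemma dot_zerovec [simp]: "dot c (zerovec k) = False"
  by (induction c arbitrary: k) (auto simp: zerovec_def, case_tac k, auto)

lemma dot_eq_odd_card:
  "length c = length y \<Longrightarrow> dot c y = odd (card {i. i < length c \<and> c ! i \<and> y ! i})"
proof (induction c y rule: list_induct2)
  case (Cons a c b y)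
  have "{i. i < length (a # c) \<and> (a # c) ! i \<and> (b # y) ! i}
      = (if a \<and> b then insert 0 else id) (Suc ` {i. i < length c \<and> c ! i \<and> y ! i})"
    by (rule set_eqI, case_tac x) auto
  with Cons.IH show ?case
    by (auto simp: card_image card_insert_if)
qed simp

lemma dot_unit_vec: "length w = l \<Longrightarrow> j < l \<Longrightarrow> dot w (unit_vec l j) = w ! j"
proof -
  assume "length w = l" "j < l"
  then have "{i. i < length w \<and> w ! i \<and> unit_vec l j ! i} = (if w ! j then {j} else {})"
    by (auto simp: unit_vec_def zerovec_def nth_list_update)
  with \<open>length w = l\<close> show ?thesis
    by (simp add: dot_eq_odd_card unit_vec_def zerovec_def)
qed

lemma sign_xor: "sign (a = (\<not> b)) = sign a * sign b"
  by (auto simp: sign_def)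

lemma sum_sign_dot:
  assumes "length y = l"
  shows "(\<Sum>c\<in>vecs l. sign (dot c y)) = (if y = zerovec l then 2 ^ l else 0)"
proof (cases "y = zerovec l")
  case True
  then show ?thesis by (simp add: sign_def card_vecs)
next
  case False
  then obtain j where j: "j < l" "y ! j"
    using nonzero_vec_first_one[OF assms] by blast
  define e where "e = unit_vec l j"
  have e: "e \<in> vecs l" by (simp add: e_def vecs_def)
  have "(\<Sum>c\<in>vecs l. sign (dot c y)) = (\<Sum>c\<in>vecs l. sign (dot (vadd c e) y))"
    by (rule sum_vecs_translate[OF e, symmetric])
  also have "\<dots> = - (\<Sum>c\<in>vecs l. sign (dot c y))"
    unfolding sum_negf[symmetric]
    by (rule sum.cong) (use assms e j in \<open>auto simp: vecs_def dot_commute[of _ y]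
          dot_vadd dot_unit_vec e_def sign_def\<close>)
  finally show ?thesis using False by simp
qed

section \<open>Spectral form of the amplitude\<close>

definition eigval :: "bool list list \<Rightarrow> bool list \<Rightarrow> complex" where
  "eigval Q c = (\<Sum>r\<leftarrow>Q. sign (dot c r))"

lemma hamil_pow_ket_zero:
  assumes rows: "\<forall>r\<in>set P. length r = l"
  shows "length y = l \<Longrightarrow>
    (hamil P ^^ k) (ket (zerovec l)) y = (\<Sum>c\<in>vecs l. sign (dot c y) * eigval P c ^ k) / 2 ^ l"
proof (induction k arbitrary: y)
  case 0
  then show ?case by (simp add: ket_def sum_sign_dot)
next
  case (Suc k)
  have "(hamil P ^^ Suc k) (ket (zerovec l)) y
      = (\<Sum>a<length P. (hamil P ^^ k) (ket (zerovec l)) (vadd y (P ! a)))"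
    by (simp add: hamil_def)
  also have "\<dots> = (\<Sum>a<length P. (\<Sum>c\<in>vecs l. sign (dot c y) * eigval P c ^ k * sign (dot c (P ! a))) / 2 ^ l)"
  proof (rule sum.cong[OF refl])
    fix a assume "a \<in> {..<length P}"
    then have "length (P ! a) = l" using rows by auto
    with Suc show "(hamil P ^^ k) (ket (zerovec l)) (vadd y (P ! a))
        = (\<Sum>c\<in>vecs l. sign (dot c y) * eigval P c ^ k * sign (dot c (P ! a))) / 2 ^ l"
      by (simp add: dot_vadd sign_xor vecs_def mult_ac)
  qed
  also have "\<dots> = (\<Sum>c\<in>vecs l. sign (dot c y) * eigval P c ^ k * (\<Sum>a<length P. sign (dot c (P ! a)))) / 2 ^ l"
    by (simp add: sum_divide_distrib[symmetric] sum_distrib_left sum.swap[of _ "{..<length P}"])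
  also have "\<dots> = (\<Sum>c\<in>vecs l. sign (dot c y) * eigval P c ^ Suc k) / 2 ^ l"
    by (simp add: eigval_def sum_list_sum_nth atLeast0LessThan mult_ac)
  finally show ?case .
qed

lemma amp_spectral:
  assumes rows: "\<forall>r\<in>set P. length r = l" and y: "length y = l"
  shows "amp l P \<theta> y = (\<Sum>c\<in>vecs l. sign (dot c y) * exp (\<i> * \<theta> * eigval P c)) / 2 ^ l"
proof -
  have "(\<lambda>k. (\<i> * \<theta>) ^ k / fact k * (hamil P ^^ k) (ket (zerovec l)) y)
      = (\<lambda>k. \<Sum>c\<in>vecs l. sign (dot c y) / 2 ^ l * ((\<i> * \<theta> * eigval P c) ^ k /\<^sub>R fact k))"
    by (simp add: hamil_pow_ket_zero[OF rows y] sum_divide_distrib sum_distrib_left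
        scaleR_conv_of_real power_mult_distrib field_simps)
  moreover have "(\<lambda>k. \<Sum>c\<in>vecs l. sign (dot c y) / 2 ^ l * ((\<i> * \<theta> * eigval P c) ^ k /\<^sub>R fact k))
      sums (\<Sum>c\<in>vecs l. sign (dot c y) / 2 ^ l * exp (\<i> * \<theta> * eigval P c))"
    by (intro sums_sum sums_mult exp_converges)
  ultimately show ?thesis
    unfolding amp_def exp_iH_def by (simp add: sums_iff sum_divide_distrib)
qed

section \<open>The code and its weight enumerator\<close>

definition mat_vec :: "bool list list \<Rightarrow> bool list \<Rightarrow> bool list" where
  "mat_vec Q c = map (\<lambda>r. dot r c) Q"

lemma length_mat_vec [simp]: "length (mat_vec Q c) = length Q"
  by (simp add: mat_vec_def)

lemma code_eq_image_mat_vec: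
  assumes rows: "\<forall>r\<in>set Q. length r = l"
  shows "code l Q = mat_vec Q ` vecs l"
proof -
  have "map (\<lambda>r. odd (card {b. b < l \<and> r ! b \<and> c ! b})) Q = mat_vec Q c" if "c \<in> vecs l" for c
    using rows that by (auto simp: mat_vec_def vecs_def dot_eq_odd_card)
  then have "(\<lambda>c. map (\<lambda>r. odd (card {b. b < l \<and> r ! b \<and> c ! b})) Q) ` vecs l = mat_vec Q ` vecs l"
    by (rule image_cong[OF refl])
  then show ?thesis
    unfolding code_def vecs_def by blast
qed

lemma mat_vec_vadd:
  assumes rows: "\<forall>r\<in>set Q. length r = l" and "c \<in> vecs l" "d \<in> vecs l"
  shows "mat_vec Q (vadd c d) = vadd (mat_vec Q c) (mat_vec Q d)"
proof -
  have map_vadd: "vadd (map f Q) (map g Q) = map (\<lambda>r. f r \<noteq> g r) Q" for f g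
    by (induction Q) auto
  show ?thesis
    unfolding mat_vec_def map_vadd using assms by (auto simp: vecs_def dot_vadd)
qed

lemma mat_vec_zerovec: "mat_vec Q (zerovec l) = zerovec (length Q)"
  unfolding mat_vec_def by (simp add: map_replicate_const zerovec_def[of "length Q"])

lemma card_fibre_mat_vec:
  assumes rows: "\<forall>r\<in>set Q. length r = l" and c0: "c0 \<in> vecs l"
  shows "card {c \<in> vecs l. mat_vec Q c = mat_vec Q c0}
       = card {d \<in> vecs l. mat_vec Q d = zerovec (length Q)}"
proof -
  have "bij_betw (vadd c0) {d \<in> vecs l. mat_vec Q d = zerovec (length Q)}
      {c \<in> vecs l. mat_vec Q c = mat_vec Q c0}"
  proof (rule bij_betw_byWitness[where f' = "vadd c0"])
    have "length (vadd c0 d) = l" if "d \<in> vecs l" for d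
      using c0 that by (simp add: vecs_def)
    then show "vadd c0 ` {d \<in> vecs l. mat_vec Q d = zerovec (length Q)}
        \<subseteq> {c \<in> vecs l. mat_vec Q c = mat_vec Q c0}"
         "vadd c0 ` {c \<in> vecs l. mat_vec Q c = mat_vec Q c0}
        \<subseteq> {d \<in> vecs l. mat_vec Q d = zerovec (length Q)}"
      using c0 by (auto simp: mat_vec_vadd[OF rows] vadd_zerovec vadd_self vecs_def)
  qed (use c0 in \<open>auto simp: vecs_def vadd_commute[of c0] vadd_vadd_cancel\<close>)
  then show ?thesis by (simp add: bij_betw_same_card)
qed

lemma sum_vecs_mat_vec:
  assumes rows: "\<forall>r\<in>set Q. length r = l"
  shows "(\<Sum>c\<in>vecs l. g (mat_vec Q c))
       = of_nat (card {d \<in> vecs l. mat_vec Q d = zerovec (length Q)}) * (\<Sum>w\<in>mat_vec Q ` vecs l. g w)"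
proof -
  have "(\<Sum>c\<in>vecs l. g (mat_vec Q c))
      = (\<Sum>w\<in>mat_vec Q ` vecs l. \<Sum>c\<in>{c \<in> vecs l. mat_vec Q c = w}. g w)"
    by (subst sum.image_gen[of "vecs l" _ "mat_vec Q"]) auto
  also have "\<dots> = (\<Sum>w\<in>mat_vec Q ` vecs l.
      of_nat (card {d \<in> vecs l. mat_vec Q d = zerovec (length Q)}) * g w)"
    by (rule sum.cong) (auto simp: card_fibre_mat_vec[OF rows])
  finally show ?thesis by (simp add: sum_distrib_left)
qed

lemma eigval_eq_hweight: "eigval Q c = of_nat (length Q) - 2 * of_nat (hweight (mat_vec Q c))"
  by (induction Q) (auto simp: eigval_def mat_vec_def sign_def hweight_def dot_commute)

lemma exp_eigval:
  "exp (\<i> * \<theta> * eigval Q c)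
   = exp (\<i> * \<theta> * length Q) * exp (- 2 * \<i> * \<theta>) ^ hweight (mat_vec Q c)"
proof -
  have "\<i> * \<theta> * eigval Q c = \<i> * \<theta> * length Q + of_nat (hweight (mat_vec Q c)) * (- 2 * \<i> * \<theta>)"
    by (simp add: eigval_eq_hweight algebra_simps)
  then show ?thesis by (simp only: exp_add exp_of_nat_mult)
qed

lemma alpha_spectral:
  assumes rows: "\<forall>r\<in>set Q. length r = l"
  shows "alpha l Q \<theta> = (\<Sum>c\<in>vecs l. exp (\<i> * \<theta> * eigval Q c)) / 2 ^ l"
proof -
  define K where "K = card {d \<in> vecs l. mat_vec Q d = zerovec (length Q)}"
  define C where "C = mat_vec Q ` vecs l"
  have card: "(2::complex) ^ l = of_nat K * of_nat (card C)"
    using sum_vecs_mat_vec[OF rows, of "\<lambda>_. 1 :: complex"] by (simp add: card_vecs K_def C_def)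
  have "(\<Sum>c\<in>vecs l. exp (\<i> * \<theta> * eigval Q c))
      = exp (\<i> * \<theta> * length Q) * (\<Sum>c\<in>vecs l. exp (- 2 * \<i> * \<theta>) ^ hweight (mat_vec Q c))"
    by (simp add: exp_eigval sum_distrib_left)
  also have "\<dots> = exp (\<i> * \<theta> * length Q) * (of_nat K * weight_enum C (exp (- 2 * \<i> * \<theta>)))"
    using sum_vecs_mat_vec[OF rows, of "\<lambda>w. exp (- 2 * \<i> * \<theta>) ^ hweight w"]
    by (simp add: K_def C_def weight_enum_def)
  finally show ?thesis
    unfolding alpha_def code_eq_image_mat_vec[OF rows] C_def[symmetric] using card
    by (auto simp: field_simps)
qed

section \<open>The projection \<open>P\<top>x\<close>\<close>

definition proj_row :: "bool list \<Rightarrow> bool list \<Rightarrow> bool list" where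
  "proj_row x a = (if lex_less (vadd a x) a then vadd a x else a)"

lemma proj_eq_map_proj_row: "proj P x = map (proj_row x) P"
  by (simp add: proj_def proj_row_def)

lemma lex_less_vadd_first_one:
  assumes "length a = length x" "j < length x" "x ! j" "\<forall>i<j. \<not> x ! i"
  shows "lex_less (vadd a x) a = a ! j"
  using assms
proof (induction j arbitrary: a x)
  case 0
  then obtain b a' x' where "a = b # a'" "x = True # x'"
    by (metis length_0_conv less_nat_zero_code neq_Nil_conv nth_Cons_0)
  then show ?case by auto
next
  case (Suc j)
  then obtain b a' z x' where ax: "a = b # a'" "x = z # x'"
    by (metis length_0_conv less_nat_zero_code neq_Nil_conv)
  with Suc.prems have "\<not> z" "\<forall>i<j. \<not> x' ! i" by auto
  with Suc.prems Suc.IH[of a' x'] show ?case by (simp add: ax)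
qed

lemma proj_row_first_one:
  assumes "length a = length x" "j < length x" "x ! j" "\<forall>i<j. \<not> x ! i"
  shows "length (proj_row x a) = length a" "\<not> proj_row x a ! j"
  using assms lex_less_vadd_first_one[OF assms] by (auto simp: proj_row_def nth_vadd)

lemma dot_proj_row:
  assumes "length c = length x" "length a = length x" "\<not> dot c x"
  shows "dot c (proj_row x a) = dot c a"
  using assms by (simp add: proj_row_def dot_vadd)

lemma eigval_proj_orthogonal:
  assumes rows: "\<forall>r\<in>set P. length r = l" and "length c = l" "length x = l" "\<not> dot c x"
  shows "eigval (proj P x) c = eigval P c"
  unfolding eigval_def proj_eq_map_proj_row using assms
  by (auto simp: comp_def dot_proj_row intro!: arg_cong[where f = sum_list] map_cong)

lemma eigval_translate_unit_vec:
  assumes rows: "\<forall>r\<in>set Q. length r = l \<and> \<not> r ! j" and "j < l" "length c = l"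
  shows "eigval Q (vadd c (unit_vec l j)) = eigval Q c"
proof -
  have "dot (vadd c (unit_vec l j)) r = dot c r" if "r \<in> set Q" for r
    using rows that assms(2,3)
    by (simp add: dot_commute[of _ r] dot_vadd dot_unit_vec)
  then show ?thesis
    unfolding eigval_def by (auto intro!: arg_cong[where f = sum_list] map_cong)
qed

lemma sum_exp_eigval_proj:
  assumes rows: "\<forall>r\<in>set P. length r = l" and x: "length x = l" "x \<noteq> zerovec l"
  shows "(\<Sum>c\<in>vecs l. exp (\<i> * \<theta> * eigval (proj P x) c))
       = (\<Sum>c\<in>vecs l. (1 + sign (dot c x)) * exp (\<i> * \<theta> * eigval P c))"
proof -
  obtain j where j: "j < l" "x ! j" "\<forall>i<j. \<not> x ! i"
    using nonzero_vec_first_one[OF x] .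
  define e where "e = unit_vec l j"
  define E where "E c = exp (\<i> * \<theta> * eigval (proj P x) c)" for c
  have e: "e \<in> vecs l" by (simp add: e_def vecs_def)
  have rows_proj: "\<forall>r\<in>set (proj P x). length r = l \<and> \<not> r ! j"
    using rows x j proj_row_first_one[of _ x j] by (auto simp: proj_eq_map_proj_row)
  txt \<open>Translating by \<open>e\<close> swaps the weights \<open>1 - \<chi>\<^sub>c(x)\<close> and \<open>1 + \<chi>\<^sub>c(x)\<close>,
    so the part of the sum odd in \<open>\<chi>\<^sub>c(x)\<close> vanishes.\<close>
  have "(\<Sum>c\<in>vecs l. (1 - sign (dot c x)) * E c)
      = (\<Sum>c\<in>vecs l. (1 - sign (dot (vadd c e) x)) * E (vadd c e))"
    by (rule sum_vecs_translate[OF e, symmetric])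
  also have "\<dots> = (\<Sum>c\<in>vecs l. (1 + sign (dot c x)) * E c)"
    by (rule sum.cong) (use x j e in \<open>auto simp: vecs_def E_def e_def sign_def dot_commute[of _ x]
        dot_vadd dot_unit_vec eigval_translate_unit_vec[OF rows_proj]\<close>)
  finally have "(\<Sum>c\<in>vecs l. sign (dot c x) * E c) = 0"
    by (simp add: algebra_simps sum.distrib sum_subtractf)
  then have "(\<Sum>c\<in>vecs l. E c) = (\<Sum>c\<in>vecs l. (1 + sign (dot c x)) * E c)"
    by (simp add: algebra_simps sum.distrib)
  also have "\<dots> = (\<Sum>c\<in>vecs l. (1 + sign (dot c x)) * exp (\<i> * \<theta> * eigval P c))"
    by (rule sum.cong) (use x in \<open>auto simp: E_def sign_def vecs_def eigval_proj_orthogonal[OF rows]\<close>)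
  finally show ?thesis by (simp add: E_def)
qed

theorem theorem1:
  fixes P :: "bool list list" and l :: nat and \<theta> :: real
  assumes "\<forall>row\<in>set P. length row = l"
  shows "amp l P \<theta> (zerovec l) = alpha l P \<theta> \<and>
         (\<forall>x. length x = l \<and> x \<noteq> zerovec l \<longrightarrow>
           amp l P \<theta> x = alpha l (proj P x) \<theta> - alpha l P \<theta>)"
proof (intro conjI allI impI)
  show "amp l P \<theta> (zerovec l) = alpha l P \<theta>"
    using amp_spectral[OF assms, of "zerovec l"] alpha_spectral[OF assms]
    by (simp add: sign_def)
next
  fix x assume x: "length x = l \<and> x \<noteq> zerovec l"
  have rows_proj: "\<forall>r\<in>set (proj P x). length r = l"
    using assms x by (auto simp: proj_def)
  show "amp l P \<theta> x = alpha l (proj P x) \<theta> - alpha l P \<theta>"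
    unfolding amp_spectral[OF assms conjunct1[OF x]] alpha_spectral[OF assms]
      alpha_spectral[OF rows_proj] sum_exp_eigval_proj[OF assms conjunct1[OF x] conjunct2[OF x]]
    by (simp add: diff_divide_distrib[symmetric] sum_subtractf[symmetric] algebra_simps)
qed

end
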